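(* Let $(X,\cdot)$ be a Rump right quasigroup, and for $x,y\in X$ write $x/y$ for the unique element $w$ with $wy = x$. Then for all $x,y \in X$: (1) $(xx)\bigl(y/(xx)\bigr) = \Bigl(x\bigl((y/(xx))/x\bigr)\Bigr)\Bigl(x\bigl((y/(xx))/x\bigr)\Bigr)$; (2) $(xx)/\bigl(y(x/y)\bigr) = (x/y)(x/y)$.
   Context: A magma $(X,\cdot)$ is a right quasigroup if every right translation $r_x: y \mapsto yx$ is a bijection of $X$; then $x/y := r_y^{-1}(x)$. A Rump right quasigroup is a right quasigroup satisfying $(zx)(yx) = (zy)(xy)$ for all $x,y,z\in X$. *)

theory Defs
  imports Main
begin

definition right_quasigroup :: "('a \<Rightarrow> 'a \<Rightarrow> 'a) \<Rightarrow> bool" where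
  "right_quasigroup m \<longleftrightarrow> (\<forall>x. bij (\<lambda>y. m y x))"

definition rump_right_quasigroup :: "('a \<Rightarrow> 'a \<Rightarrow> 'a) \<Rightarrow> bool" where
  "rump_right_quasigroup m \<longleftrightarrow> right_quasigroup m \<and>
     (\<forall>x y z. m (m z x) (m y x) = m (m z y) (m x y))"

definition rdiv :: "('a \<Rightarrow> 'a \<Rightarrow> 'a) \<Rightarrow> 'a \<Rightarrow> 'a \<Rightarrow> 'a" where
  "rdiv m x y = inv (\<lambda>w. m w y) x"

end

theory Submission
  imports Defs
begin

lemma right_quasigroup_rdiv_mult:
  assumes "right_quasigroup m"
  shows "m (rdiv m x y) y = x"
  using assms unfolding right_quasigroup_def rdiv_def
  by (meson bij_is_surj surj_f_inv_f)

lemma right_quasigroup_mult_rdiv: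
  assumes "right_quasigroup m"
  shows "rdiv m (m x y) y = x"
  using assms unfolding right_quasigroup_def rdiv_def
  by (meson bij_is_inj inv_f_f)

lemma rump_right_quasigroupD:
  assumes "rump_right_quasigroup m"
  shows "right_quasigroup m"
    and "m (m z x) (m y x) = m (m z y) (m x y)"
  using assms unfolding rump_right_quasigroup_def by blast+

text \<open>Writing u = (u / x) x puts (x x) u in the shape of the left side of the Rump identity.\<close>
lemma rump_square_mult:
  assumes "rump_right_quasigroup m"
  shows "m (m x x) u = m (m x (rdiv m u x)) (m x (rdiv m u x))"
proof -
  let ?w = "rdiv m u x"
  have "m (m x x) (m ?w x) = m (m x ?w) (m x ?w)"
    using rump_right_quasigroupD(2)[OF assms] .
  then show ?thesis
    using right_quasigroup_rdiv_mult[OF rump_right_quasigroupD(1)[OF assms]] by simp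
qed

lemma rump_square_rdiv:
  assumes "rump_right_quasigroup m"
  shows "rdiv m (m x x) (m y (rdiv m x y)) = m (rdiv m x y) (rdiv m x y)"
proof -
  let ?v = "rdiv m x y"
  have rq: "right_quasigroup m"
    using rump_right_quasigroupD(1)[OF assms] .
  have "m (m ?v ?v) (m y ?v) = m (m ?v y) (m ?v y)"
    using rump_right_quasigroupD(2)[OF assms] .
  also have "\<dots> = m x x"
    using right_quasigroup_rdiv_mult[OF rq] by simp
  finally show ?thesis
    using right_quasigroup_mult_rdiv[OF rq, of "m ?v ?v" "m y ?v"] by simp
qed

theorem mainTheorem2:
  fixes m :: "'a \<Rightarrow> 'a \<Rightarrow> 'a"
  assumes "rump_right_quasigroup m"
  shows "\<forall>x y.
     m (m x x) (rdiv m y (m x x)) =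
       m (m x (rdiv m (rdiv m y (m x x)) x)) (m x (rdiv m (rdiv m y (m x x)) x))
   \<and> rdiv m (m x x) (m y (rdiv m x y)) = m (rdiv m x y) (rdiv m x y)"
  using rump_square_mult[OF assms] rump_square_rdiv[OF assms] by blast

end
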